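(* Let $e_1,e_2$ be connected events in the LTSI of CCSK$^{\mathrm P}$. Then: (1) exactly one of $e_1\mathrel\iota e_2$ and $e_1\otimes e_2$ holds; (2) if $e_1\odot e_2$ then $e_1\mathrel\iota e_2$; (3) if $e_1,e_2$ are composable and $e_1\mathrel\iota e_2$ then $e_1\odot e_2$.
   Context: Names $\mathsf N$ with bijection $\overline\cdot$ onto disjoint co-names; $\mathsf L=\mathsf N\cup\overline{\mathsf N}\cup\{\tau\}$ ($\alpha$ over $\mathsf L$, $\lambda$ over $\mathsf L\setminus\{\tau\}$); keys $\mathsf K$ denumerable. CCSK processes $X::=\mathbf 0\mid\alpha.X\mid X\backslash\lambda\mid X+Y\mid X|Y\mid\alpha[k].X$; $\mathrm{keys}(X)$ keys in $X$. Directions $D\in\{\mathrm L,\mathrm R\}$, $\bar{\mathrm L}=\mathrm R$, $\bar{\mathrm R}=\mathrm L$. Proof keyed labels $\theta::=\upsilon\alpha[k]\mid\upsilon\langle\upsilon_1\lambda[k],\upsilon_2\overline\lambda[k]\rangle$ ($\upsilon,\upsilon_i\in\{|_{\mathrm L},|_{\mathrm R},+_{\mathrm L},+_{\mathrm R}\}^*$), $\ell(\upsilon\alpha[k])=\alpha$, $\ell(\upsilon\langle\cdots\rangle)=\tau$, $\mathrm{key}(\theta)=k$. Forward CCSK$^{\mathrm P}$ transitions: least relation closed under (act) $\alpha.X\xrightarrow{\alpha[k]}\alpha[k].X$ if $\mathrm{keys}(X)=\emptyset$; (pre) $X\xrightarrow\theta X',\mathrm{key}(\theta)\ne k\Rightarrow\alpha[k].X\xrightarrow\theta\alpha[k].X'$;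 (res) $X\xrightarrow\theta X',\ell(\theta)\notin\{\lambda,\overline\lambda\}\Rightarrow X\backslash\lambda\xrightarrow\theta X'\backslash\lambda$; (par) $X\xrightarrow\theta X',\mathrm{key}(\theta)\notin\mathrm{keys}(Y)\Rightarrow X|Y\xrightarrow{|_{\mathrm L}\theta}X'|Y$, $Y|X\xrightarrow{|_{\mathrm R}\theta}Y|X'$; (syn) $X\xrightarrow{\upsilon_1\lambda[k]}X',Y\xrightarrow{\upsilon_2\overline\lambda[k]}Y'\Rightarrow X|Y\xrightarrow{\langle\upsilon_1\lambda[k],\upsilon_2\overline\lambda[k]\rangle}X'|Y'$; (sum) $X\xrightarrow\theta X',\mathrm{keys}(Y)=\emptyset\Rightarrow X+Y\xrightarrow{+_{\mathrm L}\theta}X'+Y$, $Y+X\xrightarrow{+_{\mathrm R}\theta}Y+X'$. Backward transitions are converses of forward ones; $\bar t$ is the inverse of $t$. Only processes reachable by a path from a key-free process are considered. Transitions are connected if there is a path from the source of one to the target of the other; composable if the target of the first is the source of the second; coinitial if same source. Relations on proof labels (least closed under rules; "prefix" = form $\beta[k']$): Connectivity $\frown$: (A1) $\alpha[k]\frown\theta$; (A2) $\theta\frown\alpha[k]$ if $\theta$ not a prefix; (P1) $|_D\theta\frown|_D\theta'$ if $\theta\frown\theta'$; (P2) $|_D\theta\frown|_{\bar D}\theta'$; (C1),(C2) likewise with $+$; (S1) $|_D\theta\frown\langle\theta_{\mathrm L},\theta_{\mathrm R}\rangle$ if $\theta\frown\theta_D$; (S2) symmetric; (S3) $\langle\theta_1,\theta_2\rangle\frown\langle\theta_1',\theta_2'\rangle$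 if $\theta_i\frown\theta_i'$ for $i=1,2$. Dependence $\otimes$: A1, A2, C1, C2, P1, S1, S2 with $\otimes$ for $\frown$; (P2$_k$) $|_D\theta\otimes|_{\bar D}\theta'$ if equal keys; (S3) $\langle\theta_1,\theta_2\rangle\otimes\langle\theta_1',\theta_2'\rangle$ if for some $i\ne j$, $\theta_i\otimes\theta_i'$ and $\theta_j\frown\theta_j'$. Independence $\iota$: C1, P1, S1, S2, S3 with $\iota$ for $\frown$, and (P2$_k$) $|_D\theta\mathrel\iota|_{\bar D}\theta'$ if different keys. On transitions: $t_1\mathrel\iota t_2$ iff connected and labels $\iota$. Event equivalence $\sim$: smallest equivalence on transitions with $t\sim t'$ whenever $t:P\to Q$, $u:P\to R$, $u':Q\to S$, $t':R\to S$ ($u'$ with label and direction of $u$, $t'$ of $t$) and $t\mathrel\iota u$. Events are classes $[t]$. For events: $e_1,e_2$ connected (resp. composable) if some $t_1\in e_1$, $t_2\in e_2$ are connected (resp. composable); $e_1\mathrel\iota e_2$ if some $t_1\in e_1,t_2\in e_2$ satisfy $t_1\mathrel\iota t_2$; $e_1\otimes e_2$ if some $t_1\in e_1,t_2\in e_2$ have labels satisfying $\otimes$; core independence $e_1\odot e_2$ if some coinitial $t_1\in e_1,t_2\in e_2$ satisfy $t_1\mathrel\iota t_2$. *)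

theory Defs
  imports Main
begin

datatype 'n vis = Nm 'n | Co 'n

datatype 'n act = Vis "'n vis" | Tau

type_synonym key = nat

fun cobar :: "'n vis \<Rightarrow> 'n vis" where
  "cobar (Nm a) = Co a"
| "cobar (Co a) = Nm a"

datatype 'n proc =
    Nil
  | Pre "'n act" "'n proc"
  | Res "'n proc" "'n vis"
  | Sum "'n proc" "'n proc"
  | Par "'n proc" "'n proc"
  | KPre "'n act" key "'n proc"

fun keys :: "'n proc \<Rightarrow> key set" where
  "keys Nil = {}"
| "keys (Pre a X) = keys X"
| "keys (Res X l) = keys X"
| "keys (Sum X Y) = keys X \<union> keys Y"
| "keys (Par X Y) = keys X \<union> keys Y"
| "keys (KPre a k X) = insert k (keys X)"

datatype dir = DL | DR

fun flip :: "dir \<Rightarrow> dir" where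
  "flip DL = DR" | "flip DR = DL"

text \<open>Proof keyed labels: Act a k = \<alpha>[k]; PL D t = |_D t; SL D t = +_D t;
  Syn t1 t2 = \<langle>t1,t2\<rangle>.\<close>
datatype 'n plab =
    Act "'n act" key
  | PL dir "'n plab"
  | SL dir "'n plab"
  | Syn "'n plab" "'n plab"

fun lab :: "'n plab \<Rightarrow> 'n act" where
  "lab (Act a k) = a"
| "lab (PL d t) = lab t"
| "lab (SL d t) = lab t"
| "lab (Syn t1 t2) = Tau"

fun pkey :: "'n plab \<Rightarrow> key" where
  "pkey (Act a k) = k"
| "pkey (PL d t) = pkey t"
| "pkey (SL d t) = pkey t"
| "pkey (Syn t1 t2) = pkey t1"

definition is_prefix :: "'n plab \<Rightarrow> bool" where
  "is_prefix t \<longleftrightarrow> (\<exists>a k. t = Act a k)"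

fun comp :: "dir \<Rightarrow> 'n plab \<Rightarrow> 'n plab \<Rightarrow> 'n plab" where
  "comp DL tL tR = tL" | "comp DR tL tR = tR"

inductive fwd :: "'n proc \<Rightarrow> 'n plab \<Rightarrow> 'n proc \<Rightarrow> bool" where
  act: "keys X = {} \<Longrightarrow> fwd (Pre a X) (Act a k) (KPre a k X)"
| pre: "fwd X t X' \<Longrightarrow> pkey t \<noteq> k \<Longrightarrow> fwd (KPre a k X) t (KPre a k X')"
| res: "fwd X t X' \<Longrightarrow> lab t \<noteq> Vis l \<Longrightarrow> lab t \<noteq> Vis (cobar l) \<Longrightarrow> fwd (Res X l) t (Res X' l)"
| parL: "fwd X t X' \<Longrightarrow> pkey t \<notin> keys Y \<Longrightarrow> fwd (Par X Y) (PL DL t) (Par X' Y)"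
| parR: "fwd X t X' \<Longrightarrow> pkey t \<notin> keys Y \<Longrightarrow> fwd (Par Y X) (PL DR t) (Par Y X')"
| syn: "fwd X t1 X' \<Longrightarrow> fwd Y t2 Y' \<Longrightarrow> lab t1 = Vis l \<Longrightarrow> lab t2 = Vis (cobar l)
        \<Longrightarrow> pkey t1 = k \<Longrightarrow> pkey t2 = k \<Longrightarrow> fwd (Par X Y) (Syn t1 t2) (Par X' Y')"
| sumL: "fwd X t X' \<Longrightarrow> keys Y = {} \<Longrightarrow> fwd (Sum X Y) (SL DL t) (Sum X' Y)"
| sumR: "fwd X t X' \<Longrightarrow> keys Y = {} \<Longrightarrow> fwd (Sum Y X) (SL DR t) (Sum Y X')"

text \<open>A single step, forward or backward (backward transitions are converses).\<close>
definition step :: "'n proc \<Rightarrow> 'n proc \<Rightarrow> bool" where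
  "step P Q \<longleftrightarrow> (\<exists>t. fwd P t Q \<or> fwd Q t P)"

definition reachable :: "'n proc \<Rightarrow> bool" where
  "reachable P \<longleftrightarrow> (\<exists>P0. keys P0 = {} \<and> step\<^sup>*\<^sup>* P0 P)"

text \<open>Tr P t True Q: forward transition P --t--> Q; Tr P t False Q: backward
  transition P ~~t~~> Q, i.e. fwd Q t P.\<close>
datatype 'n tr = Tr (src: "'n proc") (tlab: "'n plab") (fw: bool) (tgt: "'n proc")

definition is_tr :: "'n tr \<Rightarrow> bool" where
  "is_tr tr \<longleftrightarrow> reachable (src tr) \<and>
     (if fw tr then fwd (src tr) (tlab tr) (tgt tr) else fwd (tgt tr) (tlab tr) (src tr))"

definition tr_connected :: "'n tr \<Rightarrow> 'n tr \<Rightarrow> bool" where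
  "tr_connected t1 t2 \<longleftrightarrow> step\<^sup>*\<^sup>* (src t1) (tgt t2)"

inductive conn :: "'n plab \<Rightarrow> 'n plab \<Rightarrow> bool" where
  A1: "conn (Act a k) t"
| A2: "\<not> is_prefix t \<Longrightarrow> conn t (Act a k)"
| P1: "conn t t' \<Longrightarrow> conn (PL d t) (PL d t')"
| P2: "conn (PL d t) (PL (flip d) t')"
| C1: "conn t t' \<Longrightarrow> conn (SL d t) (SL d t')"
| C2: "conn (SL d t) (SL (flip d) t')"
| S1: "conn t (comp d tL tR) \<Longrightarrow> conn (PL d t) (Syn tL tR)"
| S2: "conn (comp d tL tR) t \<Longrightarrow> conn (Syn tL tR) (PL d t)"
| S3: "conn t1 t1' \<Longrightarrow> conn t2 t2' \<Longrightarrow> conn (Syn t1 t2) (Syn t1' t2')"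

inductive dep :: "'n plab \<Rightarrow> 'n plab \<Rightarrow> bool" where
  A1: "dep (Act a k) t"
| A2: "\<not> is_prefix t \<Longrightarrow> dep t (Act a k)"
| P1: "dep t t' \<Longrightarrow> dep (PL d t) (PL d t')"
| P2k: "pkey t = pkey t' \<Longrightarrow> dep (PL d t) (PL (flip d) t')"
| C1: "dep t t' \<Longrightarrow> dep (SL d t) (SL d t')"
| C2: "dep (SL d t) (SL (flip d) t')"
| S1: "dep t (comp d tL tR) \<Longrightarrow> dep (PL d t) (Syn tL tR)"
| S2: "dep (comp d tL tR) t \<Longrightarrow> dep (Syn tL tR) (PL d t)"
| S3a: "dep t1 t1' \<Longrightarrow> conn t2 t2' \<Longrightarrow> dep (Syn t1 t2) (Syn t1' t2')"
| S3b: "dep t2 t2' \<Longrightarrow> conn t1 t1' \<Longrightarrow> dep (Syn t1 t2) (Syn t1' t2')"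

inductive indep :: "'n plab \<Rightarrow> 'n plab \<Rightarrow> bool" where
  C1: "indep t t' \<Longrightarrow> indep (SL d t) (SL d t')"
| P1: "indep t t' \<Longrightarrow> indep (PL d t) (PL d t')"
| P2k: "pkey t \<noteq> pkey t' \<Longrightarrow> indep (PL d t) (PL (flip d) t')"
| S1: "indep t (comp d tL tR) \<Longrightarrow> indep (PL d t) (Syn tL tR)"
| S2: "indep (comp d tL tR) t \<Longrightarrow> indep (Syn tL tR) (PL d t)"
| S3: "indep t1 t1' \<Longrightarrow> indep t2 t2' \<Longrightarrow> indep (Syn t1 t2) (Syn t1' t2')"

definition tr_indep :: "'n tr \<Rightarrow> 'n tr \<Rightarrow> bool" where
  "tr_indep t1 t2 \<longleftrightarrow> is_tr t1 \<and> is_tr t2 \<and> tr_connected t1 t2 \<and> indep (tlab t1) (tlab t2)"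

definition square :: "'n tr \<Rightarrow> 'n tr \<Rightarrow> bool" where
  "square t t' \<longleftrightarrow> is_tr t \<and> is_tr t' \<and>
     (\<exists>u u'. is_tr u \<and> is_tr u' \<and>
        src u = src t \<and> src u' = tgt t \<and> src t' = tgt u \<and> tgt u' = tgt t' \<and>
        tlab u' = tlab u \<and> fw u' = fw u \<and> tlab t' = tlab t \<and> fw t' = fw t \<and>
        tr_indep t u)"

inductive ev_eq :: "'n tr \<Rightarrow> 'n tr \<Rightarrow> bool" where
  refl: "is_tr t \<Longrightarrow> ev_eq t t"
| base: "square t t' \<Longrightarrow> ev_eq t t'"
| sym: "ev_eq t t' \<Longrightarrow> ev_eq t' t"
| trans: "ev_eq t t' \<Longrightarrow> ev_eq t' t'' \<Longrightarrow> ev_eq t t''"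

definition is_event :: "'n tr set \<Rightarrow> bool" where
  "is_event e \<longleftrightarrow> (\<exists>t. is_tr t \<and> e = {t'. ev_eq t t'})"

definition ev_connected :: "'n tr set \<Rightarrow> 'n tr set \<Rightarrow> bool" where
  "ev_connected e1 e2 \<longleftrightarrow> (\<exists>t1\<in>e1. \<exists>t2\<in>e2. tr_connected t1 t2)"

definition ev_composable :: "'n tr set \<Rightarrow> 'n tr set \<Rightarrow> bool" where
  "ev_composable e1 e2 \<longleftrightarrow> (\<exists>t1\<in>e1. \<exists>t2\<in>e2. tgt t1 = src t2)"

definition ev_indep :: "'n tr set \<Rightarrow> 'n tr set \<Rightarrow> bool" where
  "ev_indep e1 e2 \<longleftrightarrow> (\<exists>t1\<in>e1. \<exists>t2\<in>e2. tr_indep t1 t2)"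

definition ev_dep :: "'n tr set \<Rightarrow> 'n tr set \<Rightarrow> bool" where
  "ev_dep e1 e2 \<longleftrightarrow> (\<exists>t1\<in>e1. \<exists>t2\<in>e2. dep (tlab t1) (tlab t2))"

definition ev_core_indep :: "'n tr set \<Rightarrow> 'n tr set \<Rightarrow> bool" where
  "ev_core_indep e1 e2 \<longleftrightarrow> (\<exists>t1\<in>e1. \<exists>t2\<in>e2. src t1 = src t2 \<and> tr_indep t1 t2)"

end

theory Submission
  imports Defs
begin

(* All transitions of an event carry the same proof label. Transitions only add or remove keys,
   so connected transitions start from processes with the same key-free skeleton, and any two
   transitions of processes with the same skeleton have connected labels; connected labels are
   independent or dependent but never both, which gives (1), while (2) is immediate. For (3), a
   composable pair P -t-> Q -u-> R with independent labels is closed by the square property into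
   P -u-> S -t-> R, and P -u-> S is event equivalent to Q -u-> R and coinitial with t. The square
   property holds for forward and backward transitions alike and is proved by induction on the
   process. *)

definition dstep :: "'n proc \<Rightarrow> 'n plab \<Rightarrow> bool \<Rightarrow> 'n proc \<Rightarrow> bool" where
  "dstep P t b Q \<longleftrightarrow> (if b then fwd P t Q else fwd Q t P)"

lemma dstep_converse: "dstep P t b Q \<longleftrightarrow> dstep Q t (\<not> b) P"
  by (simp add: dstep_def)

lemma is_tr_iff_dstep:
  "is_tr tr \<longleftrightarrow> reachable (src tr) \<and> dstep (src tr) (tlab tr) (fw tr) (tgt tr)"
  by (simp add: is_tr_def dstep_def)

lemma dstep_imp_step: "dstep P t b Q \<Longrightarrow> step P Q"
  by (auto simp: dstep_def step_def split: if_splits)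

lemma reachable_step: "reachable P \<Longrightarrow> step P Q \<Longrightarrow> reachable Q"
  unfolding reachable_def by (meson rtranclp.rtrancl_into_rtrancl)

inductive_cases fwd_NilE: "fwd Nil t Q"
inductive_cases fwd_PreE: "fwd (Pre a X) t Q"
inductive_cases fwd_KPreE: "fwd (KPre a k X) t Q"
inductive_cases fwd_ResE: "fwd (Res X l) t Q"
inductive_cases fwd_SumE: "fwd (Sum X Y) t Q"
inductive_cases fwd_ParE: "fwd (Par X Y) t Q"
inductive_cases fwd_to_NilE: "fwd R t Nil"
inductive_cases fwd_to_PreE: "fwd R t (Pre a X)"
inductive_cases fwd_to_KPreE: "fwd R t (KPre a k X)"
inductive_cases fwd_to_ResE: "fwd R t (Res X l)"
inductive_cases fwd_to_SumE: "fwd R t (Sum X Y)"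
inductive_cases fwd_to_ParE: "fwd R t (Par X Y)"

lemma dstep_Nil: "\<not> dstep Nil t b Q"
  by (cases b) (auto simp: dstep_def elim: fwd_NilE fwd_to_NilE)

lemma dstep_Pre:
  "dstep (Pre a X) t b Q \<longleftrightarrow> b \<and> keys X = {} \<and> (\<exists>k. t = Act a k \<and> Q = KPre a k X)"
  by (cases b) (auto simp: dstep_def elim: fwd_PreE fwd_to_PreE intro: fwd.intros)

lemma dstep_KPre:
  "dstep (KPre a k X) t b Q \<longleftrightarrow>
     (\<exists>X'. Q = KPre a k X' \<and> dstep X t b X' \<and> pkey t \<noteq> k) \<or>
     (\<not> b \<and> t = Act a k \<and> Q = Pre a X \<and> keys X = {})"
  by (cases b) (auto simp: dstep_def elim: fwd_KPreE fwd_to_KPreE intro: fwd.intros)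

lemma dstep_Res:
  "dstep (Res X l) t b Q \<longleftrightarrow>
     (\<exists>X'. Q = Res X' l \<and> dstep X t b X' \<and> lab t \<noteq> Vis l \<and> lab t \<noteq> Vis (cobar l))"
  by (cases b) (auto simp: dstep_def elim: fwd_ResE fwd_to_ResE intro: fwd.intros)

lemma dstep_Sum:
  "dstep (Sum X Y) t b Q \<longleftrightarrow>
     (\<exists>t0 X'. t = SL DL t0 \<and> Q = Sum X' Y \<and> dstep X t0 b X' \<and> keys Y = {}) \<or>
     (\<exists>t0 Y'. t = SL DR t0 \<and> Q = Sum X Y' \<and> dstep Y t0 b Y' \<and> keys X = {})"
  by (cases b) (auto simp: dstep_def elim: fwd_SumE fwd_to_SumE intro: fwd.intros)

lemma dstep_Par:
  "dstep (Par X Y) t b Q \<longleftrightarrow>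
     (\<exists>t0 X'. t = PL DL t0 \<and> Q = Par X' Y \<and> dstep X t0 b X' \<and> pkey t0 \<notin> keys Y) \<or>
     (\<exists>t0 Y'. t = PL DR t0 \<and> Q = Par X Y' \<and> dstep Y t0 b Y' \<and> pkey t0 \<notin> keys X) \<or>
     (\<exists>t1 t2 X' Y' l. t = Syn t1 t2 \<and> Q = Par X' Y' \<and> dstep X t1 b X' \<and> dstep Y t2 b Y' \<and>
        lab t1 = Vis l \<and> lab t2 = Vis (cobar l) \<and> pkey t1 = pkey t2)"
  by (cases b) (auto simp: dstep_def elim: fwd_ParE fwd_to_ParE intro: fwd.intros)

lemma dstep_ParE [consumes 1, case_names left right sync]:
  assumes "dstep (Par X Y) t b Q"
  obtains (left) t0 X' where "t = PL DL t0" "Q = Par X' Y" "dstep X t0 b X'" "pkey t0 \<notin> keys Y"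
  | (right) t0 Y' where "t = PL DR t0" "Q = Par X Y'" "dstep Y t0 b Y'" "pkey t0 \<notin> keys X"
  | (sync) t1 t2 X' Y' l where "t = Syn t1 t2" "Q = Par X' Y'" "dstep X t1 b X'" "dstep Y t2 b Y'"
      "lab t1 = Vis l" "lab t2 = Vis (cobar l)" "pkey t1 = pkey t2"
  using assms unfolding dstep_Par by blast

lemma dstep_pre: "dstep X t b X' \<Longrightarrow> pkey t \<noteq> k \<Longrightarrow> dstep (KPre a k X) t b (KPre a k X')"
  by (simp add: dstep_KPre)

lemma dstep_res:
  "dstep X t b X' \<Longrightarrow> lab t \<noteq> Vis l \<Longrightarrow> lab t \<noteq> Vis (cobar l) \<Longrightarrow> dstep (Res X l) t b (Res X' l)"
  by (simp add: dstep_Res)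

lemma dstep_sumL: "dstep X t b X' \<Longrightarrow> keys Y = {} \<Longrightarrow> dstep (Sum X Y) (SL DL t) b (Sum X' Y)"
  by (simp add: dstep_Sum)

lemma dstep_sumR: "dstep Y t b Y' \<Longrightarrow> keys X = {} \<Longrightarrow> dstep (Sum X Y) (SL DR t) b (Sum X Y')"
  by (simp add: dstep_Sum)

lemma dstep_parL:
  "dstep X t b X' \<Longrightarrow> pkey t \<notin> keys Y \<Longrightarrow> dstep (Par X Y) (PL DL t) b (Par X' Y)"
  by (simp add: dstep_Par)

lemma dstep_parR:
  "dstep Y t b Y' \<Longrightarrow> pkey t \<notin> keys X \<Longrightarrow> dstep (Par X Y) (PL DR t) b (Par X Y')"
  by (simp add: dstep_Par)

lemma dstep_syn:
  "dstep X t1 b X' \<Longrightarrow> dstep Y t2 b Y' \<Longrightarrow> lab t1 = Vis l \<Longrightarrow> lab t2 = Vis (cobar l) \<Longrightarrow>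
    pkey t1 = pkey t2 \<Longrightarrow> dstep (Par X Y) (Syn t1 t2) b (Par X' Y')"
  by (auto simp: dstep_Par)

lemma fwd_keys: "fwd X t X' \<Longrightarrow> keys X' = insert (pkey t) (keys X)"
  by (induction rule: fwd.induct) auto

lemma dstep_keys: "dstep X t b X' \<Longrightarrow> keys X' \<subseteq> insert (pkey t) (keys X)"
  by (auto simp: dstep_def fwd_keys split: if_splits)

lemma dstep_fresh_key: "dstep X t b X' \<Longrightarrow> k \<notin> keys X \<Longrightarrow> k \<noteq> pkey t \<Longrightarrow> k \<notin> keys X'"
  using dstep_keys by blast

(* pkey (Syn t1 t2) is the key of t1 alone, so the distinct keys of independent labels are only
   guaranteed when both halves of every synchronisation share their key, as in any transition. *)
fun key_consistent :: "'n plab \<Rightarrow> bool" where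
  "key_consistent (Act a k) \<longleftrightarrow> True"
| "key_consistent (PL d t) \<longleftrightarrow> key_consistent t"
| "key_consistent (SL d t) \<longleftrightarrow> key_consistent t"
| "key_consistent (Syn t1 t2) \<longleftrightarrow> key_consistent t1 \<and> key_consistent t2 \<and> pkey t1 = pkey t2"

lemma fwd_key_consistent: "fwd P t Q \<Longrightarrow> key_consistent t"
  by (induction rule: fwd.induct) auto

lemma dstep_key_consistent: "dstep P t b Q \<Longrightarrow> key_consistent t"
  by (auto simp: dstep_def fwd_key_consistent split: if_splits)

inductive_simps indep_simps:
  "indep (Act a k) t" "indep t (Act a k)" "indep (PL d t) t'" "indep (SL d t) t'" "indep (Syn t1 t2) t'"

lemma indep_pkey_neq:
  "indep t u \<Longrightarrow> key_consistent t \<Longrightarrow> key_consistent u \<Longrightarrow> pkey t \<noteq> pkey u"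
proof (induction rule: indep.induct)
  case (S1 t d tL tR)
  then show ?case by (cases d) auto
next
  case (S2 d tL tR t)
  then show ?case by (cases d) auto
qed auto

lemma indep_sym: "indep t u \<Longrightarrow> indep u t"
proof (induction rule: indep.induct)
  case (P2k t t' d)
  then show ?case using indep.P2k[of t' t "flip d"] by (cases d) auto
qed (auto intro: indep.intros)

definition square_property :: "'n proc \<Rightarrow> bool" where
  "square_property P \<longleftrightarrow>
     (\<forall>t b Q u c R. dstep P t b Q \<longrightarrow> dstep P u c R \<longrightarrow> indep t u \<longrightarrow>
        (\<exists>S. dstep Q u c S \<and> dstep R t b S))"

lemma square_Par_left:
  assumes "square_property X"
    and t: "dstep X t b X1" "pkey t \<notin> keys Y"
    and u: "dstep (Par X Y) u c R" and tu: "indep (PL DL t) u"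
  shows "\<exists>S. dstep (Par X1 Y) u c S \<and> dstep R (PL DL t) b S"
proof -
  have keys_differ: "pkey t \<noteq> pkey u"
    using indep_pkey_neq[OF tu] t u by (auto dest: dstep_key_consistent)
  from u show ?thesis
  proof (cases rule: dstep_ParE)
    case (left u0 X2)
    with tu have "indep t u0" by (simp add: indep_simps)
    with assms(1) t left obtain S where "dstep X1 u0 c S" "dstep X2 t b S"
      unfolding square_property_def by blast
    with t left show ?thesis by (blast intro: dstep_parL)
  next
    case (right u0 Y2)
    with t keys_differ show ?thesis
      by (metis dstep_fresh_key dstep_parL dstep_parR pkey.simps(2))
  next
    case (sync u1 u2 X2 Y2 l)
    with tu have "indep t u1" by (simp add: indep_simps)
    with assms(1) t sync obtain S where "dstep X1 u1 c S" "dstep X2 t b S"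
      unfolding square_property_def by blast
    with t sync keys_differ show ?thesis
      by (metis dstep_fresh_key dstep_parL dstep_syn pkey.simps)
  qed
qed

lemma square_Par_right:
  assumes "square_property Y"
    and t: "dstep Y t b Y1" "pkey t \<notin> keys X"
    and u: "dstep (Par X Y) u c R" and tu: "indep (PL DR t) u"
  shows "\<exists>S. dstep (Par X Y1) u c S \<and> dstep R (PL DR t) b S"
proof -
  have keys_differ: "pkey t \<noteq> pkey u"
    using indep_pkey_neq[OF tu] t u by (auto dest: dstep_key_consistent)
  from u show ?thesis
  proof (cases rule: dstep_ParE)
    case (left u0 X2)
    with t keys_differ show ?thesis
      by (metis dstep_fresh_key dstep_parL dstep_parR pkey.simps(2))
  next
    case (right u0 Y2)
    with tu have "indep t u0" by (simp add: indep_simps)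
    with assms(1) t right obtain S where "dstep Y1 u0 c S" "dstep Y2 t b S"
      unfolding square_property_def by blast
    with t right show ?thesis by (blast intro: dstep_parR)
  next
    case (sync u1 u2 X2 Y2 l)
    with tu have "indep t u2" by (simp add: indep_simps)
    with assms(1) t sync obtain S where "dstep Y1 u2 c S" "dstep Y2 t b S"
      unfolding square_property_def by blast
    with t sync keys_differ show ?thesis
      by (metis dstep_fresh_key dstep_parR dstep_syn pkey.simps)
  qed
qed

lemma square_property_Par:
  assumes sqX: "square_property X" and sqY: "square_property Y"
  shows "square_property (Par X Y)"
  unfolding square_property_def
proof (intro allI impI)
  fix t b Q u c R
  assume t: "dstep (Par X Y) t b Q" and u: "dstep (Par X Y) u c R" and tu: "indep t u"
  have ut: "indep u t" using tu by (rule indep_sym)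
  from t show "\<exists>S. dstep Q u c S \<and> dstep R t b S"
  proof (cases rule: dstep_ParE)
    case (left t0 X1)
    with square_Par_left[OF sqX _ _ u] tu show ?thesis by blast
  next
    case (right t0 Y1)
    with square_Par_right[OF sqY _ _ u] tu show ?thesis by blast
  next
    case (sync t1 t2 X1 Y1 l)
    note t_sync = this
    from u show ?thesis
    proof (cases rule: dstep_ParE)
      case (left u0 X2)
      with square_Par_left[OF sqX _ _ t] ut show ?thesis by blast
    next
      case (right u0 Y2)
      with square_Par_right[OF sqY _ _ t] ut show ?thesis by blast
    next
      case (sync u1 u2 X2 Y2 l')
      with t_sync tu have "indep t1 u1" "indep t2 u2" by (simp_all add: indep_simps)
      with sqX sqY t_sync sync obtain S1 S2 where
        "dstep X1 u1 c S1" "dstep X2 t1 b S1" "dstep Y1 u2 c S2" "dstep Y2 t2 b S2"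
        unfolding square_property_def by meson
      with t_sync sync show ?thesis by (metis dstep_syn)
    qed
  qed
qed

lemma square_property_KPre: "square_property X \<Longrightarrow> square_property (KPre a k X)"
  unfolding square_property_def dstep_KPre by (auto simp: indep_simps) (meson dstep_pre)

lemma square_property_Res: "square_property X \<Longrightarrow> square_property (Res X l)"
  unfolding square_property_def dstep_Res by auto (meson dstep_res)

lemma square_property_Sum:
  assumes "square_property X" and "square_property Y"
  shows "square_property (Sum X Y)"
  using assms unfolding square_property_def dstep_Sum
  by (auto simp: indep_simps) (meson dstep_sumL dstep_sumR)+

lemma square_property_holds: "square_property P"
proof (induction P)
  case Nil
  then show ?case by (simp add: square_property_def dstep_Nil)
next
  case (Pre a X)
  then show ?case by (auto simp: square_property_def dstep_Pre indep_simps)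
qed (simp_all add: square_property_KPre square_property_Res square_property_Sum
    square_property_Par)

lemma dstep_square:
  "dstep P t b Q \<Longrightarrow> dstep P u c R \<Longrightarrow> indep t u \<Longrightarrow> \<exists>S. dstep Q u c S \<and> dstep R t b S"
  using square_property_holds unfolding square_property_def by blast

fun erase :: "'n proc \<Rightarrow> 'n proc" where
  "erase Nil = Nil"
| "erase (Pre a X) = Pre a (erase X)"
| "erase (KPre a k X) = Pre a (erase X)"
| "erase (Res X l) = Res (erase X) l"
| "erase (Sum X Y) = Sum (erase X) (erase Y)"
| "erase (Par X Y) = Par (erase X) (erase Y)"

lemma fwd_erase: "fwd P t Q \<Longrightarrow> erase P = erase Q"
  by (induction rule: fwd.induct) auto

lemma steps_erase: "step\<^sup>*\<^sup>* P Q \<Longrightarrow> erase P = erase Q"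
  by (induction rule: rtranclp_induct) (auto simp: step_def dest: fwd_erase)

lemma conn_Act_right: "conn t (Act a k)"
  by (cases t) (auto simp: is_prefix_def intro: conn.intros)

lemma conn_PL_flip: "conn (PL DL t) (PL DR t')" "conn (PL DR t) (PL DL t')"
  using conn.P2[of DL t t'] conn.P2[of DR t t'] by auto

lemma conn_SL_flip: "conn (SL DL t) (SL DR t')" "conn (SL DR t) (SL DL t')"
  using conn.C2[of DL t t'] conn.C2[of DR t t'] by auto

lemma conn_PL_Syn:
  "conn t tL \<Longrightarrow> conn (PL DL t) (Syn tL tR)" "conn t tR \<Longrightarrow> conn (PL DR t) (Syn tL tR)"
  using conn.S1[of t DL tL tR] conn.S1[of t DR tL tR] by auto

lemma conn_Syn_PL:
  "conn tL t \<Longrightarrow> conn (Syn tL tR) (PL DL t)" "conn tR t \<Longrightarrow> conn (Syn tL tR) (PL DR t)"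
  using conn.S2[of DL tL tR t] conn.S2[of DR tL tR t] by auto

lemma fwd_conn_if_erase_eq: "fwd P t P' \<Longrightarrow> fwd Q u Q' \<Longrightarrow> erase P = erase Q \<Longrightarrow> conn t u"
proof (induction arbitrary: Q u Q' rule: fwd.induct)
  case (act X a k)
  then show ?case by (auto intro: conn.intros)
next
  case (pre X t X' k a)
  then show ?case by (cases Q) (auto elim!: fwd_KPreE fwd_PreE intro: conn_Act_right)
next
  case (res X t X' l)
  then show ?case by (cases Q) (auto elim!: fwd_ResE intro: conn_Act_right)
next
  case (parL X t X' Y)
  then show ?case by (cases Q) 
      (auto elim!: fwd_ParE intro: conn_Act_right conn.P1 conn_PL_flip conn_PL_Syn)
next
  case (parR X t X' Y)
  then show ?case by (cases Q) 
      (auto elim!: fwd_ParE intro: conn_Act_right conn.P1 conn_PL_flip conn_PL_Syn)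
next
  case (syn X t1 X' Y t2 Y' l k)
  then show ?case by (cases Q) (auto elim!: fwd_ParE intro: conn.S3 conn_Syn_PL)
next
  case (sumL X t X' Y)
  then show ?case by (cases Q) (auto elim!: fwd_SumE intro: conn.C1 conn_SL_flip)
next
  case (sumR X t X' Y)
  then show ?case by (cases Q) (auto elim!: fwd_SumE intro: conn.C1 conn_SL_flip)
qed

lemma tr_connected_conn:
  assumes "is_tr t1" and "is_tr t2" and "tr_connected t1 t2"
  shows "conn (tlab t1) (tlab t2)"
proof -
  have "\<exists>A B. fwd A (tlab t) B \<and> erase A = erase (src t) \<and> erase A = erase (tgt t)"
    if "is_tr t" for t :: "'n tr"
    using that fwd_erase unfolding is_tr_def by metis
  then obtain A1 B1 A2 B2 where
    "fwd A1 (tlab t1) B1" "erase A1 = erase (src t1)"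
    "fwd A2 (tlab t2) B2" "erase A2 = erase (tgt t2)"
    using assms(1,2) by meson
  moreover have "erase (src t1) = erase (tgt t2)"
    using assms(3) steps_erase unfolding tr_connected_def by blast
  ultimately show ?thesis by (metis fwd_conn_if_erase_eq)
qed

inductive_simps dep_simps: "dep (PL d t) t'" "dep (SL d t) t'" "dep (Syn t1 t2) t'"

lemma flip_neq: "flip d \<noteq> d" "d \<noteq> flip d"
  by (cases d; simp)+

lemma indep_imp_not_dep: "indep t u \<Longrightarrow> \<not> dep t u"
  by (induction rule: indep.induct) (auto simp: dep_simps is_prefix_def flip_neq)

lemma conn_imp_indep_or_dep: "conn t u \<Longrightarrow> indep t u \<or> dep t u"
proof (induction rule: conn.induct)
  case (P2 d t t')
  then show ?case by (cases "pkey t = pkey t'") (auto intro: indep.intros dep.intros)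
qed (auto intro: indep.intros dep.intros)

lemma ev_eq_is_tr: "ev_eq t t' \<Longrightarrow> is_tr t \<and> is_tr t'"
  by (induction rule: ev_eq.induct) (auto simp: square_def)

lemma ev_eq_tlab: "ev_eq t t' \<Longrightarrow> tlab t' = tlab t"
  by (induction rule: ev_eq.induct) (auto simp: square_def)

lemma composable_indep_imp_coinitial:
  assumes t1: "is_tr t1" and t2: "is_tr t2" and mid: "tgt t1 = src t2"
    and indep12: "indep (tlab t1) (tlab t2)"
  obtains t2' where "ev_eq t2 t2'" "src t2' = src t1" "tr_indep t1 t2'"
proof -
  have "dstep (tgt t1) (tlab t1) (\<not> fw t1) (src t1)"
    using t1 by (simp add: is_tr_iff_dstep dstep_converse[of "src t1"])
  moreover have "dstep (tgt t1) (tlab t2) (fw t2) (tgt t2)"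
    using t2 mid by (simp add: is_tr_iff_dstep)
  ultimately obtain S where
    S: "dstep (src t1) (tlab t2) (fw t2) S" "dstep (tgt t2) (tlab t1) (\<not> fw t1) S"
    using dstep_square indep12 by blast
  define t2' where "t2' = Tr (src t1) (tlab t2) (fw t2) S"
  define u' where "u' = Tr S (tlab t1) (fw t1) (tgt t2)"
  have reach: "reachable (src t1)" "reachable S"
    using t1 S(1) by (auto simp: is_tr_iff_dstep intro: reachable_step dstep_imp_step)
  have tr_t2': "is_tr t2'" and tr_u': "is_tr u'"
    using reach S by (simp_all add: is_tr_iff_dstep t2'_def u'_def dstep_converse[of "tgt t2"])
  have "tr_connected t2' t1" "tr_connected t1 t2'"
    using t1 S(1) by (auto simp: tr_connected_def t2'_def is_tr_iff_dstep dest: dstep_imp_step)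
  moreover have "indep (tlab t2') (tlab t1)" "indep (tlab t1) (tlab t2')"
    using indep12 by (simp_all add: t2'_def indep_sym)
  ultimately have indep_21: "tr_indep t2' t1" and indep_12: "tr_indep t1 t2'"
    using t1 tr_t2' by (simp_all add: tr_indep_def)
  have "src t2' = src t1" "tgt t2' = S" "tlab t2' = tlab t2" "fw t2' = fw t2"
    "src u' = S" "tgt u' = tgt t2" "tlab u' = tlab t1" "fw u' = fw t1"
    by (simp_all add: t2'_def u'_def)
  then have "square t2' t2"
    unfolding square_def
    by (intro conjI tr_t2' t2 exI[of _ t1, OF exI[of _ u']])
      (simp_all add: t1 tr_u' indep_21 mid)
  then have "ev_eq t2 t2'" by (blast intro: ev_eq.base ev_eq.sym)
  then show thesis using that indep_12 by (simp add: t2'_def)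
qed

definition ev_lab :: "'n tr set \<Rightarrow> 'n plab" where
  "ev_lab e = tlab (SOME t. t \<in> e)"

lemma event_nonempty: "is_event e \<Longrightarrow> \<exists>t. t \<in> e"
  unfolding is_event_def by (blast intro: ev_eq.refl)

lemma event_closed: "is_event e \<Longrightarrow> t \<in> e \<Longrightarrow> ev_eq t t' \<Longrightarrow> t' \<in> e"
  unfolding is_event_def by (blast intro: ev_eq.trans)

lemma event_memberD:
  assumes "is_event e" and "t \<in> e"
  shows "is_tr t \<and> tlab t = ev_lab e"
proof -
  obtain a where e: "e = {t'. ev_eq a t'}"
    using \<open>is_event e\<close> unfolding is_event_def by blast
  have "tlab t' = tlab a" if "t' \<in> e" for t'
    using that e ev_eq_tlab by blast
  moreover have "(SOME t. t \<in> e) \<in> e"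
    using \<open>t \<in> e\<close> by (rule someI)
  ultimately show ?thesis
    using \<open>t \<in> e\<close> e ev_eq_is_tr by (auto simp: ev_lab_def)
qed

lemma ev_connected_conn:
  "is_event e1 \<Longrightarrow> is_event e2 \<Longrightarrow> ev_connected e1 e2 \<Longrightarrow> conn (ev_lab e1) (ev_lab e2)"
  unfolding ev_connected_def by (metis event_memberD tr_connected_conn)

lemma ev_indep_iff:
  assumes "is_event e1" and "is_event e2" and "ev_connected e1 e2"
  shows "ev_indep e1 e2 \<longleftrightarrow> indep (ev_lab e1) (ev_lab e2)"
  using assms event_memberD unfolding ev_indep_def tr_indep_def ev_connected_def by metis

lemma ev_dep_iff:
  "is_event e1 \<Longrightarrow> is_event e2 \<Longrightarrow> ev_dep e1 e2 \<longleftrightarrow> dep (ev_lab e1) (ev_lab e2)"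
  unfolding ev_dep_def by (metis event_memberD event_nonempty)

lemma ev_core_indep_imp_ev_indep: "ev_core_indep e1 e2 \<Longrightarrow> ev_indep e1 e2"
  unfolding ev_core_indep_def ev_indep_def by blast

lemma ev_composable_indep_imp_core_indep:
  assumes e1: "is_event e1" and e2: "is_event e2"
    and "ev_composable e1 e2" and "ev_indep e1 e2"
  shows "ev_core_indep e1 e2"
proof -
  obtain t1 t2 where t12: "t1 \<in> e1" "t2 \<in> e2" "tgt t1 = src t2"
    using \<open>ev_composable e1 e2\<close> unfolding ev_composable_def by blast
  have "indep (tlab t1) (tlab t2)"
    using \<open>ev_indep e1 e2\<close> e1 e2 t12 event_memberD
    unfolding ev_indep_def tr_indep_def by metis
  with t12 e1 e2 obtain t2' where "ev_eq t2 t2'" "src t2' = src t1" "tr_indep t1 t2'"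
    by (metis composable_indep_imp_coinitial event_memberD)
  then show ?thesis
    unfolding ev_core_indep_def using t12 e2 event_closed by metis
qed

theorem lemma6p4:
  fixes e1 e2 :: "'n tr set"
  assumes "is_event e1" and "is_event e2" and "ev_connected e1 e2"
  shows "(ev_indep e1 e2 \<longleftrightarrow> \<not> ev_dep e1 e2) \<and>
         (ev_core_indep e1 e2 \<longrightarrow> ev_indep e1 e2) \<and>
         (ev_composable e1 e2 \<and> ev_indep e1 e2 \<longrightarrow> ev_core_indep e1 e2)"
proof -
  have "conn (ev_lab e1) (ev_lab e2)"
    using assms by (rule ev_connected_conn)
  then have "indep (ev_lab e1) (ev_lab e2) \<longleftrightarrow> \<not> dep (ev_lab e1) (ev_lab e2)"
    using conn_imp_indep_or_dep indep_imp_not_dep by blast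
  then have "ev_indep e1 e2 \<longleftrightarrow> \<not> ev_dep e1 e2"
    using assms by (simp add: ev_indep_iff ev_dep_iff)
  then show ?thesis
    using assms(1,2) ev_core_indep_imp_ev_indep ev_composable_indep_imp_core_indep by blast
qed

end
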